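(* For every pure context $F$, terms $t_0,t_1$ and variable $x\notin\mathrm{fv}(F)$, we have $F[(\lambda x.t_0)\,t_1] \sim (\lambda x.F[t_0])\,t_1$.
   Context: The calculus $\lambda_{\mathcal S}$. Terms: $t ::= x \mid \lambda x.t \mid t\,t \mid \mathcal{S}k.t \mid \langle t\rangle$ (shift and reset); values: $v ::= \lambda x.t \mid x$. $\lambda x.t$ binds $x$, $\mathcal{S}k.t$ binds $k$; terms up to $\alpha$-conversion; $\mathrm{fv}$ free variables; capture-avoiding substitution $t\{v/x\}$. Pure contexts $F ::= [\,] \mid v\,F \mid F\,t$ (free variables of a context are those of its subterms); evaluation contexts $E ::= [\,] \mid v\,E \mid E\,t \mid \langle E\rangle$. Reduction: $E[(\lambda x.t)\,v] \to E[t\{v/x\}]$; $E[\langle F[\mathcal{S}k.t]\rangle] \to E[\langle t\{\lambda x.\langle F[x]\rangle/k\}\rangle]$ ($x\notin\mathrm{fv}(F)$); $E[\langle v\rangle]\to E[v]$. $t\Downarrow t'$ iff $t\to^*t'$ and $t'$ irreducible. Normal forms: values, control stuck terms $F[\mathcal{S}k.t]$, and open stuck terms $E[x\,v]$. Fresh: not free in the terms/contexts considered. Normal form bisimilarity $\sim$: for a relation $\mathcal R$ on terms, $E_0\mathrel{\mathcal R}E_1$ iff either $E_0=E_0'[\langle F_0\rangle]$, $E_1=E_1'[\langle F_1\rangle]$ ($F_i$ pure) with $E_0'[x]\mathrel{\mathcal R}E_1'[x]$ and $\langle F_0[x]\rangle\mathrel{\mathcal R}\langle F_1[x]\rangle$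 ($x$ fresh), or $E_0=F_0$, $E_1=F_1$ pure with $F_0[x]\mathrel{\mathcal R}F_1[x]$ ($x$ fresh). $v\mathbin{@}y$ is $x\,y$ if $v=x$, $t\{y/x\}$ if $v=\lambda x.t$. $\mathcal R^{\mathrm{nf}}$ on normal forms: $v_0\mathrel{\mathcal R^{\mathrm{nf}}}v_1$ if $v_0\mathbin{@}x\mathrel{\mathcal R}v_1\mathbin{@}x$ ($x$ fresh); $F_0[\mathcal{S}k.t_0]\mathrel{\mathcal R^{\mathrm{nf}}}F_1[\mathcal{S}k.t_1]$ if $F_0\mathrel{\mathcal R}F_1$ and $\langle t_0\rangle\mathrel{\mathcal R}\langle t_1\rangle$; $E_0[x\,v_0]\mathrel{\mathcal R^{\mathrm{nf}}}E_1[x\,v_1]$ if $E_0\mathrel{\mathcal R}E_1$ and $v_0\mathrel{\mathcal R^{\mathrm{nf}}}v_1$. $\mathcal R$ is a normal form simulation if $t_0\mathrel{\mathcal R}t_1$ and $t_0\Downarrow t_0'$ imply $t_1\Downarrow t_1'$ with $t_0'\mathrel{\mathcal R^{\mathrm{nf}}}t_1'$; a bisimulation if $\mathcal R$ and $\mathcal R^{-1}$ are simulations; $\sim$ is the largest normal form bisimulation. *)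

theory Defs
  imports Main
begin

text \<open>Terms of lambda_S up to alpha-conversion, represented with de Bruijn indices.
  Var i is a variable (bound if i points to an enclosing binder, free otherwise);
  Lam t is lambda x.t and Sft t is S k.t (both bind index 0 in t); Rst t is the reset.\<close>

datatype trm = Var nat | Lam trm | App trm trm | Sft trm | Rst trm

fun lift :: "nat \<Rightarrow> trm \<Rightarrow> trm" where
  "lift k (Var i) = (if i < k then Var i else Var (Suc i))"
| "lift k (Lam t) = Lam (lift (Suc k) t)"
| "lift k (App s t) = App (lift k s) (lift k t)"
| "lift k (Sft t) = Sft (lift (Suc k) t)"
| "lift k (Rst t) = Rst (lift k t)"

fun subst :: "trm \<Rightarrow> nat \<Rightarrow> trm \<Rightarrow> trm" where
  "subst (Var i) k s = (if k < i then Var (i - 1) else if i = k then s else Var i)"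
| "subst (Lam t) k s = Lam (subst t (Suc k) (lift 0 s))"
| "subst (App t u) k s = App (subst t k s) (subst u k s)"
| "subst (Sft t) k s = Sft (subst t (Suc k) (lift 0 s))"
| "subst (Rst t) k s = Rst (subst t k s)"

fun fv :: "trm \<Rightarrow> nat set" where
  "fv (Var i) = {i}"
| "fv (Lam t) = {i. Suc i \<in> fv t}"
| "fv (App s t) = fv s \<union> fv t"
| "fv (Sft t) = {i. Suc i \<in> fv t}"
| "fv (Rst t) = fv t"

fun is_val :: "trm \<Rightarrow> bool" where
  "is_val (Var _) = True"
| "is_val (Lam _) = True"
| "is_val _ = False"

datatype ctx = Hole | CAppR trm ctx | CAppL ctx trm | CRst ctx

fun plug :: "ctx \<Rightarrow> trm \<Rightarrow> trm" where
  "plug Hole t = t"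
| "plug (CAppR v E) t = App v (plug E t)"
| "plug (CAppL E u) t = App (plug E t) u"
| "plug (CRst E) t = Rst (plug E t)"

fun ccomp :: "ctx \<Rightarrow> ctx \<Rightarrow> ctx" where
  "ccomp Hole G = G"
| "ccomp (CAppR v E) G = CAppR v (ccomp E G)"
| "ccomp (CAppL E u) G = CAppL (ccomp E G) u"
| "ccomp (CRst E) G = CRst (ccomp E G)"

fun liftc :: "nat \<Rightarrow> ctx \<Rightarrow> ctx" where
  "liftc k Hole = Hole"
| "liftc k (CAppR v E) = CAppR (lift k v) (liftc k E)"
| "liftc k (CAppL E u) = CAppL (liftc k E) (lift k u)"
| "liftc k (CRst E) = CRst (liftc k E)"

fun fvc :: "ctx \<Rightarrow> nat set" where
  "fvc Hole = {}"
| "fvc (CAppR v E) = fv v \<union> fvc E"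
| "fvc (CAppL E u) = fvc E \<union> fv u"
| "fvc (CRst E) = fvc E"

fun pure :: "ctx \<Rightarrow> bool" where
  "pure Hole = True"
| "pure (CAppR v F) = (is_val v \<and> pure F)"
| "pure (CAppL F u) = pure F"
| "pure (CRst _) = False"

fun evctx :: "ctx \<Rightarrow> bool" where
  "evctx Hole = True"
| "evctx (CAppR v E) = (is_val v \<and> evctx E)"
| "evctx (CAppL E u) = evctx E"
| "evctx (CRst E) = evctx E"

inductive step :: "trm \<Rightarrow> trm \<Rightarrow> bool" where
  beta: "evctx E \<Longrightarrow> is_val v \<Longrightarrow> step (plug E (App (Lam t) v)) (plug E (subst t 0 v))"
| shift: "evctx E \<Longrightarrow> pure F \<Longrightarrow>
    step (plug E (Rst (plug F (Sft t))))
         (plug E (Rst (subst t 0 (Lam (Rst (plug (liftc 0 F) (Var 0)))))))"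
| reset: "evctx E \<Longrightarrow> is_val v \<Longrightarrow> step (plug E (Rst v)) (plug E v)"

definition eval :: "trm \<Rightarrow> trm \<Rightarrow> bool" where
  "eval t t' \<longleftrightarrow> step\<^sup>*\<^sup>* t t' \<and> (\<nexists>u. step t' u)"

fun app_at :: "trm \<Rightarrow> nat \<Rightarrow> trm" where
  "app_at (Var z) y = App (Var z) (Var y)"
| "app_at (Lam t) y = subst t 0 (Var y)"
| "app_at t y = t"

definition ctx_rel :: "(trm \<Rightarrow> trm \<Rightarrow> bool) \<Rightarrow> ctx \<Rightarrow> ctx \<Rightarrow> bool" where
  "ctx_rel R E0 E1 \<longleftrightarrow>
     (\<exists>E0' E1' F0 F1 x. evctx E0' \<and> evctx E1' \<and> pure F0 \<and> pure F1 \<and>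
        E0 = ccomp E0' (CRst F0) \<and> E1 = ccomp E1' (CRst F1) \<and>
        x \<notin> fvc E0 \<and> x \<notin> fvc E1 \<and>
        R (plug E0' (Var x)) (plug E1' (Var x)) \<and>
        R (Rst (plug F0 (Var x))) (Rst (plug F1 (Var x))))
   \<or> (pure E0 \<and> pure E1 \<and>
        (\<exists>x. x \<notin> fvc E0 \<and> x \<notin> fvc E1 \<and> R (plug E0 (Var x)) (plug E1 (Var x))))"

definition val_rel :: "(trm \<Rightarrow> trm \<Rightarrow> bool) \<Rightarrow> trm \<Rightarrow> trm \<Rightarrow> bool" where
  "val_rel R v0 v1 \<longleftrightarrow> is_val v0 \<and> is_val v1 \<and>
     (\<exists>x. x \<notin> fv v0 \<and> x \<notin> fv v1 \<and> R (app_at v0 x) (app_at v1 x))"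

definition nf_rel :: "(trm \<Rightarrow> trm \<Rightarrow> bool) \<Rightarrow> trm \<Rightarrow> trm \<Rightarrow> bool" where
  "nf_rel R a b \<longleftrightarrow>
     val_rel R a b
   \<or> (\<exists>F0 F1 t0 t1. pure F0 \<and> pure F1 \<and> a = plug F0 (Sft t0) \<and> b = plug F1 (Sft t1) \<and>
        ctx_rel R F0 F1 \<and> R (Rst t0) (Rst t1))
   \<or> (\<exists>E0 E1 x v0 v1. evctx E0 \<and> evctx E1 \<and>
        a = plug E0 (App (Var x) v0) \<and> b = plug E1 (App (Var x) v1) \<and>
        ctx_rel R E0 E1 \<and> val_rel R v0 v1)"

definition nf_sim :: "(trm \<Rightarrow> trm \<Rightarrow> bool) \<Rightarrow> bool" where
  "nf_sim R \<longleftrightarrow> (\<forall>t0 t1 t0'. R t0 t1 \<longrightarrow> eval t0 t0' \<longrightarrow>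
                     (\<exists>t1'. eval t1 t1' \<and> nf_rel R t0' t1'))"

definition nf_bisim :: "(trm \<Rightarrow> trm \<Rightarrow> bool) \<Rightarrow> bool" where
  "nf_bisim R \<longleftrightarrow> nf_sim R \<and> nf_sim R\<inverse>\<inverse>"

text \<open>Normal form bisimilarity: the largest normal form bisimulation
  (the union of all of them, which is itself one since nf_rel is monotone).\<close>
definition nf_bisimilar :: "trm \<Rightarrow> trm \<Rightarrow> bool" (infix "\<approx>nf" 50) where
  "t0 \<approx>nf t1 \<longleftrightarrow> (\<exists>R. nf_bisim R \<and> R t0 t1)"

end

theory Submission
  imports Defs
begin

text \<open>Both sides are a pure context wrapped around the argument t1:
  G_A = F[(\<lambda>x.t0) []] on the left and G_B = (\<lambda>x.F[t0]) [] on the right.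
  While t1 is not a value, any reduction of G[t1] takes place inside t1, so both sides
  reduce in lockstep; once t1 has become a value v, each side has exactly one reduct,
  namely F[t0{v/x}]; and if t1 gets stuck, both sides are stuck with related contexts.
  Hence the identity together with all pairs (G_A[u], G_B[u]) is a normal form
  bisimulation.\<close>

definition irreducible :: "trm \<Rightarrow> bool" where
  "irreducible t \<longleftrightarrow> (\<nexists>u. step t u)"

lemma eval_iff: "eval t t' \<longleftrightarrow> step\<^sup>*\<^sup>* t t' \<and> irreducible t'"
  unfolding eval_def irreducible_def ..

lemma plug_ccomp [simp]: "plug (ccomp A B) t = plug A (plug B t)"
  by (induct A) auto

lemma ccomp_assoc: "ccomp (ccomp A B) C = ccomp A (ccomp B C)"
  by (induct A) auto

lemma pure_ccomp [simp]: "pure (ccomp A B) \<longleftrightarrow> pure A \<and> pure B"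
  by (induct A) auto

lemma evctx_ccomp [simp]: "evctx (ccomp A B) \<longleftrightarrow> evctx A \<and> evctx B"
  by (induct A) auto

lemma fvc_ccomp [simp]: "fvc (ccomp A B) = fvc A \<union> fvc B"
  by (induct A) auto

lemma pure_imp_evctx: "pure G \<Longrightarrow> evctx G"
  by (induct G) auto

lemma evctx_cases:
  "evctx E \<Longrightarrow> pure E \<or> (\<exists>E' F. evctx E' \<and> pure F \<and> E = ccomp E' (CRst F))"
proof (induct E)
  case (CAppR v E)
  then show ?case by (metis ccomp.simps(2) evctx.simps(2) pure.simps(2))
next
  case (CAppL E u)
  then show ?case by (metis ccomp.simps(3) evctx.simps(3) pure.simps(3))
next
  case (CRst E)
  then show ?case by (metis ccomp.simps(1,4) evctx.simps(1,4))
qed simp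

lemma is_val_plug: "is_val (plug G u) \<Longrightarrow> G = Hole \<and> is_val u"
  by (cases G) auto

lemma plug_eq_Lam_iff: "plug E r = Lam s \<longleftrightarrow> E = Hole \<and> r = Lam s"
  by (cases E) auto

lemma plug_eq_Var_iff: "plug E r = Var i \<longleftrightarrow> E = Hole \<and> r = Var i"
  by (cases E) auto

lemma finite_fv: "finite (fv t)"
proof (induct t)
  case (Lam t) then show ?case by (simp add: finite_vimageI[of _ Suc, simplified vimage_def])
next
  case (Sft t) then show ?case by (simp add: finite_vimageI[of _ Suc, simplified vimage_def])
qed auto

lemma finite_fvc: "finite (fvc E)"
  by (induct E) (auto simp: finite_fv)

lemma ex_fresh: "finite (A :: nat set) \<Longrightarrow> \<exists>x. x \<notin> A"
  by (meson ex_new_if_finite infinite_UNIV_nat)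

fun substc :: "ctx \<Rightarrow> nat \<Rightarrow> trm \<Rightarrow> ctx" where
  "substc Hole k s = Hole"
| "substc (CAppR v E) k s = CAppR (subst v k s) (substc E k s)"
| "substc (CAppL E u) k s = CAppL (substc E k s) (subst u k s)"
| "substc (CRst E) k s = CRst (substc E k s)"

lemma subst_lift [simp]: "subst (lift k t) k s = t"
  by (induct t arbitrary: k s) auto

lemma subst_plug: "subst (plug G t) k s = plug (substc G k s) (subst t k s)"
  by (induct G) auto

lemma substc_liftc [simp]: "substc (liftc k G) k s = G"
  by (induct G) auto

lemma subst_plug_liftc: "subst (plug (liftc k F) t) k s = plug F (subst t k s)"
  by (simp add: subst_plug)

subsection \<open>Reduction in pure contexts\<close>

definition redex :: "trm \<Rightarrow> bool" where
  "redex r \<longleftrightarrow> (\<exists>t v. r = App (Lam t) v \<and> is_val v) \<or> (\<exists>q. r = Rst q)"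

lemma redex_App: "redex (App p q) \<Longrightarrow> is_val p \<and> is_val q"
  unfolding redex_def by auto

lemma not_is_val_plug_redex: "redex r \<Longrightarrow> \<not> is_val (plug E r)"
  using is_val_plug unfolding redex_def by fastforce

lemma step_plug_evctx: "step u u' \<Longrightarrow> evctx G \<Longrightarrow> step (plug G u) (plug G u')"
proof (induct rule: step.induct)
  case (beta E v t)
  then show ?case using step.beta[of "ccomp G E" v t] by simp
next
  case (shift E F t)
  then show ?case using step.shift[of "ccomp G E" F t] by simp
next
  case (reset E v)
  then show ?case using step.reset[of "ccomp G E" v] by simp
qed

text \<open>A pure context has no redex position besides its hole, so a redex occurring
  in G[u] with u not a value lies inside u.\<close>
lemma plug_redex_in_pure_ctx:
  "pure G \<Longrightarrow> evctx E \<Longrightarrow> plug E r = plug G u \<Longrightarrow> \<not> is_val u \<Longrightarrow> redex r \<Longrightarrow>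
   \<exists>E'. E = ccomp G E' \<and> plug E' r = u"
proof (induct G arbitrary: E)
  case (CAppR v G)
  show ?case
  proof (cases E)
    case Hole
    then have "is_val (plug G u)" using CAppR.prems redex_App by simp
    then show ?thesis using is_val_plug CAppR.prems by blast
  next
    case (CAppR v' E')
    then show ?thesis using CAppR.prems CAppR.hyps[of E'] by auto
  next
    case (CAppL E' t)
    then show ?thesis using CAppR.prems not_is_val_plug_redex by auto
  qed (use CAppR.prems in auto)
next
  case (CAppL G t)
  show ?case
  proof (cases E)
    case Hole
    then have "is_val (plug G u)" using CAppL.prems redex_App by simp
    then show ?thesis using is_val_plug CAppL.prems by blast
  next
    case (CAppR v' E')
    then show ?thesis using CAppL.prems is_val_plug by auto
  next
    case (CAppL E' t')
    then show ?thesis using CAppL.prems CAppL.hyps[of E'] by auto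
  qed (use CAppL.prems in auto)
qed auto

lemma step_plug_pure_nonval:
  "step (plug G u) w \<Longrightarrow> pure G \<Longrightarrow> \<not> is_val u \<Longrightarrow> \<exists>u'. step u u' \<and> w = plug G u'"
proof (induct "plug G u" w rule: step.induct)
  case (beta E v t)
  then obtain E' where "E = ccomp G E'" "plug E' (App (Lam t) v) = u"
    using plug_redex_in_pure_ctx[of G E "App (Lam t) v" u] unfolding redex_def by metis
  then show ?case using beta step.beta[of E' v t] by auto
next
  case (shift E F t)
  then obtain E' where "E = ccomp G E'" "plug E' (Rst (plug F (Sft t))) = u"
    using plug_redex_in_pure_ctx[of G E "Rst (plug F (Sft t))" u] unfolding redex_def by metis
  then show ?case using shift step.shift[of E' F t] by auto
next
  case (reset E v)
  then obtain E' where "E = ccomp G E'" "plug E' (Rst v) = u"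
    using plug_redex_in_pure_ctx[of G E "Rst v" u] unfolding redex_def by metis
  then show ?case using reset step.reset[of E' v] by auto
qed

lemma irreducible_plug_pure_iff:
  assumes "pure G" "\<not> is_val u"
  shows "irreducible (plug G u) \<longleftrightarrow> irreducible u"
  using step_plug_evctx[OF _ pure_imp_evctx[OF assms(1)]] step_plug_pure_nonval[OF _ assms]
  unfolding irreducible_def by blast

lemma step_beta_iff:
  assumes "is_val v"
  shows "step (App (Lam s) v) w \<longleftrightarrow> w = subst s 0 v"
proof
  assume "step (App (Lam s) v) w"
  then show "w = subst s 0 v" using assms
  proof (induct "App (Lam s) v" w rule: step.induct)
    case (beta E v' t)
    then show ?case by (cases E) (auto dest!: is_val_plug simp: plug_eq_Lam_iff plug_eq_Var_iff)
  next
    case (shift E F t)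
    then show ?case by (cases E) (auto dest!: is_val_plug simp: plug_eq_Lam_iff plug_eq_Var_iff)
  next
    case (reset E v')
    then show ?case by (cases E) (auto dest!: is_val_plug simp: plug_eq_Lam_iff plug_eq_Var_iff)
  qed
qed (use step.beta[of Hole v s] assms in simp)

lemma step_beta_in_pure_iff:
  assumes "pure F" "is_val v"
  shows "step (plug F (App (Lam s) v)) w \<longleftrightarrow> w = plug F (subst s 0 v)"
proof
  assume "step (plug F (App (Lam s) v)) w"
  then obtain u' where "step (App (Lam s) v) u'" "w = plug F u'"
    using step_plug_pure_nonval assms(1) by fastforce
  then show "w = plug F (subst s 0 v)" using step_beta_iff[OF assms(2)] by simp
qed (use step.beta[of F v s] assms pure_imp_evctx in simp)

lemma irreducible_cases:
  "irreducible t \<Longrightarrow> is_val t \<or> (\<exists>F s. pure F \<and> t = plug F (Sft s))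
     \<or> (\<exists>E x v. evctx E \<and> is_val v \<and> t = plug E (App (Var x) v))"
proof (induct t)
  case (Sft t) then show ?case by (intro disjI2 disjI1 exI[of _ Hole]) auto
next
  case (Rst s)
  have "irreducible s"
    using Rst.prems step_plug_evctx[of s _ "CRst Hole"] unfolding irreducible_def by auto
  from Rst.hyps[OF this] show ?case
  proof (elim disjE exE conjE)
    assume "is_val s"
    then show ?thesis using Rst.prems step.reset[of Hole s] unfolding irreducible_def by auto
  next
    fix F q assume "pure F" "s = plug F (Sft q)"
    then show ?thesis using Rst.prems step.shift[of Hole F q] unfolding irreducible_def by auto
  next
    fix E x v assume "evctx E" "is_val v" "s = plug E (App (Var x) v)"
    then show ?thesis by (intro disjI2 exI[of _ "CRst E"]) auto
  qed
next
  case (App p q)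
  have "irreducible p"
    using App.prems step_plug_evctx[of p _ "CAppL Hole q"] unfolding irreducible_def by auto
  from App.hyps(1)[OF this] show ?case
  proof (elim disjE exE conjE)
    assume vp: "is_val p"
    then have "irreducible q"
      using App.prems step_plug_evctx[of q _ "CAppR p Hole"] unfolding irreducible_def by auto
    from App.hyps(2)[OF this] show ?thesis
    proof (elim disjE exE conjE)
      assume vq: "is_val q"
      show ?thesis
      proof (cases p)
        case (Var x) then show ?thesis using vq by (intro disjI2 exI[of _ Hole]) auto
      next
        case (Lam s)
        then show ?thesis using vq App.prems step.beta[of Hole q s] unfolding irreducible_def by auto
      qed (use vp in auto)
    next
      fix F s assume "pure F" "q = plug F (Sft s)"
      then show ?thesis using vp by (intro disjI2 disjI1 exI[of _ "CAppR p F"]) auto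
    next
      fix E x v assume "evctx E" "is_val v" "q = plug E (App (Var x) v)"
      then show ?thesis using vp by (intro disjI2 exI[of _ "CAppR p E"]) auto
    qed
  next
    fix F s assume "pure F" "p = plug F (Sft s)"
    then show ?thesis by (intro disjI2 disjI1 exI[of _ "CAppL F q"]) auto
  next
    fix E x v assume "evctx E" "is_val v" "p = plug E (App (Var x) v)"
    then show ?thesis by (intro disjI2 exI[of _ "CAppL E q"]) auto
  qed
qed auto

lemma val_rel_refl: "(\<And>t. Q t t) \<Longrightarrow> is_val v \<Longrightarrow> val_rel Q v v"
  unfolding val_rel_def using ex_fresh[OF finite_fv[of v]] by auto

lemma ctx_rel_ccomp:
  assumes "\<And>w. Q (plug GA w) (plug GB w)" "\<And>t. Q t t" "pure GA" "pure GB" "evctx E"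
  shows "ctx_rel Q (ccomp GA E) (ccomp GB E)"
proof -
  obtain x where x: "x \<notin> fvc GA \<union> fvc GB \<union> fvc E"
    using ex_fresh[of "fvc GA \<union> fvc GB \<union> fvc E"] finite_fvc by auto
  from evctx_cases[OF assms(5)] show ?thesis
  proof (elim disjE exE conjE)
    assume "pure E" then show ?thesis unfolding ctx_rel_def using assms x by auto
  next
    fix E' F assume E: "evctx E'" "pure F" "E = ccomp E' (CRst F)"
    show ?thesis unfolding ctx_rel_def
      by (rule disjI1, rule exI[of _ "ccomp GA E'"], rule exI[of _ "ccomp GB E'"],
          rule exI[of _ F], rule exI[of _ F], rule exI[of _ x])
        (use E assms x pure_imp_evctx in \<open>auto simp: ccomp_assoc\<close>)
  qed
qed

lemma nf_rel_plug_pure: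
  assumes Q: "\<And>w. Q (plug GA w) (plug GB w)" "\<And>t. Q t t" and pure: "pure GA" "pure GB"
    and u: "irreducible u" "\<not> is_val u"
  shows "nf_rel Q (plug GA u) (plug GB u)"
  using irreducible_cases[OF u(1)]
proof (elim disjE exE conjE)
  assume "is_val u" then show ?thesis using u by simp
next
  fix F s assume "pure F" "u = plug F (Sft s)"
  then show ?thesis unfolding nf_rel_def
    by (intro disjI2 disjI1 exI[of _ "ccomp GA F"] exI[of _ "ccomp GB F"] exI[of _ s])
      (use pure ctx_rel_ccomp[OF Q pure] pure_imp_evctx Q in auto)
next
  fix E x v assume "evctx E" "is_val v" "u = plug E (App (Var x) v)"
  then show ?thesis unfolding nf_rel_def
    by (intro disjI2 exI[of _ "ccomp GA E"] exI[of _ "ccomp GB E"] exI[of _ x] exI[of _ v])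
      (use pure ctx_rel_ccomp[OF Q pure] pure_imp_evctx val_rel_refl Q in auto)
qed

lemma nf_rel_refl:
  assumes "\<And>t. Q t t" "irreducible a"
  shows "nf_rel Q a a"
proof (cases "is_val a")
  case True
  then show ?thesis unfolding nf_rel_def using val_rel_refl assms(1) by blast
next
  case False
  then show ?thesis using nf_rel_plug_pure[of Q Hole Hole a] assms by simp
qed

subsection \<open>Bisimulations generated by pairs of pure contexts\<close>

definition converge_on_values :: "ctx \<Rightarrow> ctx \<Rightarrow> bool" where
  "converge_on_values GA GB \<longleftrightarrow> (\<forall>v. is_val v \<longrightarrow>
     (\<exists>c. (\<forall>w. step (plug GA v) w \<longleftrightarrow> w = c) \<and> (\<forall>w. step (plug GB v) w \<longleftrightarrow> w = c)))"

definition ctx_pair_closure :: "(ctx \<Rightarrow> ctx \<Rightarrow> bool) \<Rightarrow> trm \<Rightarrow> trm \<Rightarrow> bool" where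
  "ctx_pair_closure P a b \<longleftrightarrow> a = b \<or> (\<exists>GA GB u. P GA GB \<and> a = plug GA u \<and> b = plug GB u)"

lemma converge_on_values_sym: "converge_on_values GA GB \<Longrightarrow> converge_on_values GB GA"
  unfolding converge_on_values_def by blast

lemma ctx_pair_closure_conversep:
  "(ctx_pair_closure P)\<inverse>\<inverse> = ctx_pair_closure P\<inverse>\<inverse>"
  unfolding ctx_pair_closure_def by (auto simp: fun_eq_iff)

lemma eval_ctx_pair:
  assumes P: "\<And>GA GB. P GA GB \<Longrightarrow> pure GA \<and> pure GB \<and> converge_on_values GA GB"
    and GAB: "P GA GB" and steps: "step\<^sup>*\<^sup>* (plug GA u) a'" and irr: "irreducible a'"
  shows "\<exists>b'. eval (plug GB u) b' \<and> nf_rel (ctx_pair_closure P) a' b'"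
proof -
  let ?Q = "ctx_pair_closure P"
  have Q: "\<And>w. ?Q (plug GA w) (plug GB w)" "\<And>t. ?Q t t"
    using GAB unfolding ctx_pair_closure_def by blast+
  have pure: "pure GA" "pure GB" and conv: "converge_on_values GA GB"
    using P[OF GAB] by auto
  show ?thesis using steps
  proof (induct "plug GA u" arbitrary: u rule: converse_rtranclp_induct)
    case base
    show ?case
    proof (cases "is_val u")
      case True
      then obtain c where "\<forall>w. step (plug GA u) w \<longleftrightarrow> w = c"
        using conv unfolding converge_on_values_def by blast
      then have "step (plug GA u) c" by blast
      then show ?thesis using base irr unfolding irreducible_def by blast
    next
      case False
      have "irreducible u" "irreducible (plug GB u)"
        using irreducible_plug_pure_iff[OF _ False] pure irr base by simp_all
      moreover have "nf_rel ?Q a' (plug GB u)"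
        using nf_rel_plug_pure[OF Q pure \<open>irreducible u\<close> False] base by simp
      ultimately show ?thesis unfolding eval_iff by blast
    qed
  next
    case (step z u)
    show ?case
    proof (cases "is_val u")
      case True
      then obtain c where "\<forall>w. step (plug GA u) w \<longleftrightarrow> w = c" "\<forall>w. step (plug GB u) w \<longleftrightarrow> w = c"
        using conv unfolding converge_on_values_def by blast
      then have "step (plug GB u) z" using step(1) by blast
      then have "step\<^sup>*\<^sup>* (plug GB u) a'"
        using step(2) by (rule converse_rtranclp_into_rtranclp)
      then show ?thesis using irr nf_rel_refl[where Q = ?Q, OF Q(2) irr] unfolding eval_iff by blast
    next
      case False
      then obtain u' where u': "step u u'" "z = plug GA u'"
        using step_plug_pure_nonval step(1) pure by blast
      then obtain b' where "eval (plug GB u') b'" "nf_rel ?Q a' b'"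
        using step(3) by blast
      moreover have "step (plug GB u) (plug GB u')"
        using step_plug_evctx[OF u'(1)] pure pure_imp_evctx by blast
      ultimately show ?thesis unfolding eval_def by (meson converse_rtranclp_into_rtranclp)
    qed
  qed
qed

lemma nf_sim_ctx_pair_closure:
  assumes "\<And>GA GB. P GA GB \<Longrightarrow> pure GA \<and> pure GB \<and> converge_on_values GA GB"
  shows "nf_sim (ctx_pair_closure P)"
  unfolding nf_sim_def
proof (intro allI impI)
  fix a b a' assume ab: "ctx_pair_closure P a b" and ev: "eval a a'"
  then have irr: "irreducible a'" unfolding eval_iff by blast
  show "\<exists>b'. eval b b' \<and> nf_rel (ctx_pair_closure P) a' b'"
  proof (cases "a = b")
    case True
    have "nf_rel (ctx_pair_closure P) a' a'"
      by (rule nf_rel_refl[OF _ irr]) (simp add: ctx_pair_closure_def)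
    then show ?thesis using ev True by blast
  next
    case False
    then obtain GA GB u where "P GA GB" "a = plug GA u" "b = plug GB u"
      using ab unfolding ctx_pair_closure_def by blast
    then show ?thesis using eval_ctx_pair[OF assms _ _ irr] ev unfolding eval_iff by blast
  qed
qed

lemma nf_bisim_ctx_pair_closure:
  assumes "\<And>GA GB. P GA GB \<Longrightarrow> pure GA \<and> pure GB \<and> converge_on_values GA GB"
  shows "nf_bisim (ctx_pair_closure P)"
proof -
  have "nf_sim (ctx_pair_closure P\<inverse>\<inverse>)"
    by (rule nf_sim_ctx_pair_closure) (use assms converge_on_values_sym in blast)
  then show ?thesis
    unfolding nf_bisim_def ctx_pair_closure_conversep using nf_sim_ctx_pair_closure[OF assms] by blast
qed

definition beta_ctx_pair :: "ctx \<Rightarrow> ctx \<Rightarrow> bool" where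
  "beta_ctx_pair GA GB \<longleftrightarrow> (\<exists>F s. pure F \<and>
     GA = ccomp F (CAppR (Lam s) Hole) \<and> GB = CAppR (Lam (plug (liftc 0 F) s)) Hole)"

lemma beta_ctx_pair_converge:
  assumes "pure F"
  shows "converge_on_values (ccomp F (CAppR (Lam s) Hole)) (CAppR (Lam (plug (liftc 0 F) s)) Hole)"
  unfolding converge_on_values_def
proof (intro allI impI)
  fix v assume "is_val v"
  then show "\<exists>c. (\<forall>w. step (plug (ccomp F (CAppR (Lam s) Hole)) v) w \<longleftrightarrow> w = c)
      \<and> (\<forall>w. step (plug (CAppR (Lam (plug (liftc 0 F) s)) Hole) v) w \<longleftrightarrow> w = c)"
    using step_beta_in_pure_iff[OF assms] step_beta_iff subst_plug_liftc[of 0 F s]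
    by (intro exI[of _ "plug F (subst s 0 v)"]) simp
qed

theorem proposition4:
  fixes F :: ctx and t0 t1 :: trm
  assumes "pure F"
  shows "plug F (App (Lam t0) t1) \<approx>nf App (Lam (plug (liftc 0 F) t0)) t1"
proof -
  let ?GA = "ccomp F (CAppR (Lam t0) Hole)" and ?GB = "CAppR (Lam (plug (liftc 0 F) t0)) Hole"
  have "nf_bisim (ctx_pair_closure beta_ctx_pair)"
    by (rule nf_bisim_ctx_pair_closure) (auto simp: beta_ctx_pair_def beta_ctx_pair_converge)
  moreover have "beta_ctx_pair ?GA ?GB"
    using assms unfolding beta_ctx_pair_def by blast
  then have "ctx_pair_closure beta_ctx_pair (plug ?GA t1) (plug ?GB t1)"
    unfolding ctx_pair_closure_def by blast
  ultimately show ?thesis unfolding nf_bisimilar_def by auto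
qed

end
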